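(* For all metric formulas $\varphi,\psi$ and every interval $I$, the following equivalences hold in MHT: $\neg(\varphi\,\mathsf{U}_I\,\psi)\equiv\neg\varphi\,\mathsf{R}_I\,\neg\psi$, $\neg(\varphi\,\mathsf{R}_I\,\psi)\equiv\neg\varphi\,\mathsf{U}_I\,\neg\psi$, $\neg(\varphi\,\mathsf{S}_I\,\psi)\equiv\neg\varphi\,\mathsf{T}_I\,\neg\psi$, $\neg(\varphi\,\mathsf{T}_I\,\psi)\equiv\neg\varphi\,\mathsf{S}_I\,\neg\psi$.
   Context: Write $[m,n)=\{i\in\mathbb{N}\mid m\le i<n\}$, $(m,n]=\{i\in\mathbb{N}\mid m<i\le n\}$. Metric formulas over a set of atoms $\mathcal{A}$: $\varphi::=p\mid\bot\mid\varphi_1\wedge\varphi_2\mid\varphi_1\vee\varphi_2\mid\varphi_1\to\varphi_2\mid\bullet_I\varphi\mid\varphi_1\mathsf{S}_I\varphi_2\mid\varphi_1\mathsf{T}_I\varphi_2\mid\circ_I\varphi\mid\varphi_1\mathsf{U}_I\varphi_2\mid\varphi_1\mathsf{R}_I\varphi_2$, $p\in\mathcal{A}$, $I=[m,n)$, $m\in\mathbb{N}$, $n\in\mathbb{N}\cup\{\omega\}$; $\neg\varphi:=\varphi\to\bot$, $\varphi\leftrightarrow\psi:=(\varphi\to\psi)\wedge(\psi\to\varphi)$. A timed HT-trace of length $\lambda\in\mathbb{N}\cup\{\omega\}$ is $\mathbf{M}=(\langle\mathbf{H},\mathbf{T}\rangle,\tau)$ with $H_i\subseteq T_i\subseteq\mathcal{A}$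 for $i\in[0,\lambda)$, $\tau:[0,\lambda)\to\mathbb{N}$, $\tau(0)=0$, $\tau(i)\le\tau(i+1)$. Satisfaction at $k\in[0,\lambda)$: $\bot$ never; $p$ iff $p\in H_k$; $\wedge,\vee$ usual; $\varphi\to\psi$ iff for both $\mathbf{M}'=\mathbf{M}$ and $\mathbf{M}'=(\langle\mathbf{T},\mathbf{T}\rangle,\tau)$, $\mathbf{M}',k\not\models\varphi$ or $\mathbf{M}',k\models\psi$; $\bullet_I\varphi$ iff $k>0$, $\mathbf{M},k-1\models\varphi$, $\tau(k)-\tau(k-1)\in I$; $\varphi\mathsf{S}_I\psi$ iff for some $j\in[0,k]$ with $\tau(k)-\tau(j)\in I$, $\mathbf{M},j\models\psi$ and $\mathbf{M},i\models\varphi$ for all $i\in(j,k]$; $\varphi\mathsf{T}_I\psi$ iff for all $j\in[0,k]$ with $\tau(k)-\tau(j)\in I$, $\mathbf{M},j\models\psi$ or $\mathbf{M},i\models\varphi$ for some $i\in(j,k]$; $\circ_I\varphi$ iff $k+1<\lambda$, $\mathbf{M},k+1\models\varphi$, $\tau(k+1)-\tau(k)\in I$; $\varphi\mathsf{U}_I\psi$ iff for some $j\in[k,\lambda)$ with $\tau(j)-\tau(k)\in I$, $\mathbf{M},j\models\psi$ and $\mathbf{M},i\models\varphi$ for all $i\in[k,j)$; $\varphi\mathsf{R}_I\psi$ iff for all $j\in[k,\lambda)$ with $\tau(j)-\tau(k)\in I$, $\mathbf{M},j\models\psi$ or $\mathbf{M},i\models\varphi$ for some $i\in[k,j)$. $\alpha\equiv\beta$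 in MHT means $\alpha\leftrightarrow\beta$ is satisfied at every $k\in[0,\lambda)$ of every timed HT-trace of every length $\lambda$. *)

theory Defs
  imports Main "HOL-Library.Extended_Nat"
begin

text \<open>Intervals [m,n) with m natural and n natural or omega (infinity).\<close>
type_synonym interval = "nat \<times> enat"

definition in_interval :: "nat \<Rightarrow> interval \<Rightarrow> bool" where
  "in_interval d I \<longleftrightarrow> fst I \<le> d \<and> enat d < snd I"

datatype 'a mformula =
    Atom 'a
  | Bot
  | Conj "'a mformula" "'a mformula"
  | Disj "'a mformula" "'a mformula"
  | Impl "'a mformula" "'a mformula"
  | Prev interval "'a mformula"
  | Since interval "'a mformula" "'a mformula"
  | Trigger interval "'a mformula" "'a mformula"
  | Next interval "'a mformula"
  | Until interval "'a mformula" "'a mformula"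
  | Release interval "'a mformula" "'a mformula"

definition Neg :: "'a mformula \<Rightarrow> 'a mformula" where
  "Neg \<phi> = Impl \<phi> Bot"

definition Iff :: "'a mformula \<Rightarrow> 'a mformula \<Rightarrow> 'a mformula" where
  "Iff \<phi> \<psi> = Conj (Impl \<phi> \<psi>) (Impl \<psi> \<phi>)"

text \<open>Timed HT-trace of length lam (enat): here-sets H, there-sets T, timing tau.\<close>
definition timed_ht_trace ::
  "enat \<Rightarrow> (nat \<Rightarrow> 'a set) \<Rightarrow> (nat \<Rightarrow> 'a set) \<Rightarrow> (nat \<Rightarrow> nat) \<Rightarrow> bool" where
  "timed_ht_trace lam H T \<tau> \<longleftrightarrow>
     (\<forall>i. enat i < lam \<longrightarrow> H i \<subseteq> T i) \<and> \<tau> 0 = 0 \<and>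
     (\<forall>i. enat (Suc i) < lam \<longrightarrow> \<tau> i \<le> \<tau> (Suc i))"

primrec sat ::
  "enat \<Rightarrow> (nat \<Rightarrow> 'a set) \<Rightarrow> (nat \<Rightarrow> 'a set) \<Rightarrow> (nat \<Rightarrow> nat) \<Rightarrow> nat \<Rightarrow> 'a mformula \<Rightarrow> bool"
where
  "sat lam H T \<tau> k (Atom p) = (p \<in> H k)"
| "sat lam H T \<tau> k Bot = False"
| "sat lam H T \<tau> k (Conj \<phi> \<psi>) = (sat lam H T \<tau> k \<phi> \<and> sat lam H T \<tau> k \<psi>)"
| "sat lam H T \<tau> k (Disj \<phi> \<psi>) = (sat lam H T \<tau> k \<phi> \<or> sat lam H T \<tau> k \<psi>)"
| "sat lam H T \<tau> k (Impl \<phi> \<psi>) =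
     ((\<not> sat lam H T \<tau> k \<phi> \<or> sat lam H T \<tau> k \<psi>) \<and>
      (\<not> sat lam T T \<tau> k \<phi> \<or> sat lam T T \<tau> k \<psi>))"
| "sat lam H T \<tau> k (Prev I \<phi>) =
     (k > 0 \<and> sat lam H T \<tau> (k - 1) \<phi> \<and> in_interval (\<tau> k - \<tau> (k - 1)) I)"
| "sat lam H T \<tau> k (Since I \<phi> \<psi>) =
     (\<exists>j. j \<le> k \<and> in_interval (\<tau> k - \<tau> j) I \<and> sat lam H T \<tau> j \<psi> \<and>
          (\<forall>i. j < i \<and> i \<le> k \<longrightarrow> sat lam H T \<tau> i \<phi>))"
| "sat lam H T \<tau> k (Trigger I \<phi> \<psi>) =
     (\<forall>j. j \<le> k \<and> in_interval (\<tau> k - \<tau> j) I \<longrightarrow> sat lam H T \<tau> j \<psi> \<or>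
          (\<exists>i. j < i \<and> i \<le> k \<and> sat lam H T \<tau> i \<phi>))"
| "sat lam H T \<tau> k (Next I \<phi>) =
     (enat (Suc k) < lam \<and> sat lam H T \<tau> (Suc k) \<phi> \<and> in_interval (\<tau> (Suc k) - \<tau> k) I)"
| "sat lam H T \<tau> k (Until I \<phi> \<psi>) =
     (\<exists>j. k \<le> j \<and> enat j < lam \<and> in_interval (\<tau> j - \<tau> k) I \<and> sat lam H T \<tau> j \<psi> \<and>
          (\<forall>i. k \<le> i \<and> i < j \<longrightarrow> sat lam H T \<tau> i \<phi>))"
| "sat lam H T \<tau> k (Release I \<phi> \<psi>) =
     (\<forall>j. k \<le> j \<and> enat j < lam \<and> in_interval (\<tau> j - \<tau> k) I \<longrightarrow> sat lam H T \<tau> j \<psi> \<or>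
          (\<exists>i. k \<le> i \<and> i < j \<and> sat lam H T \<tau> i \<phi>))"

definition mht_equiv :: "'a mformula \<Rightarrow> 'a mformula \<Rightarrow> bool" where
  "mht_equiv \<alpha> \<beta> \<longleftrightarrow>
     (\<forall>lam H T \<tau> k. timed_ht_trace lam H T \<tau> \<and> enat k < lam \<longrightarrow> sat lam H T \<tau> k (Iff \<alpha> \<beta>))"

end

theory Submission
  imports Defs
begin

text \<open>Negation is evaluated in the there-world, which is classical, and by persistence the
  here-world satisfies \<open>\<not>\<phi>\<close> exactly when the there-world falsifies \<open>\<phi>\<close>. Every position
  quantified over by a metric operator lies inside the trace, so both sides of each equivalence
  become classical statements about the there-world, which agree by the De Morgan laws for
  bounded quantifiers.\<close>

lemma sat_here_imp_there:
  assumes "\<forall>i. enat i < lam \<longrightarrow> H i \<subseteq> T i" and "enat k < lam" and "sat lam H T \<tau> k \<phi>"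
  shows "sat lam T T \<tau> k \<phi>"
  using assms(2,3)
proof (induction \<phi> arbitrary: k)
  case (Atom p)
  then show ?case using assms(1) by auto
next
  case (Prev I \<phi>)
  then show ?case
    by (simp add: Suc_ile_eq) (metis Suc_ile_eq Suc_pred less_imp_le)
next
  case (Since I \<phi> \<psi>)
  then show ?case by simp (meson enat_ord_simps(1) order_le_less_trans)
next
  case (Trigger I \<phi> \<psi>)
  then show ?case by simp (meson enat_ord_simps(1) order_le_less_trans)
next
  case (Until I \<phi> \<psi>)
  then show ?case by simp (meson enat_ord_simps(2) order_less_trans)
next
  case (Release I \<phi> \<psi>)
  then show ?case by simp (meson enat_ord_simps(2) order_less_trans)
qed auto

lemma sat_Neg_iff:
  assumes "timed_ht_trace lam H T \<tau>" and "enat k < lam"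
  shows "sat lam H T \<tau> k (Neg \<phi>) \<longleftrightarrow> \<not> sat lam T T \<tau> k \<phi>"
  using sat_here_imp_there[of lam H T k \<tau> \<phi>] assms
  by (auto simp: Neg_def timed_ht_trace_def)

lemma timed_ht_trace_there: "timed_ht_trace lam H T \<tau> \<Longrightarrow> timed_ht_trace lam T T \<tau>"
  by (simp add: timed_ht_trace_def)

lemma mht_equivI:
  assumes "\<And>lam (H :: nat \<Rightarrow> 'a set) T \<tau> k. timed_ht_trace lam H T \<tau> \<Longrightarrow> enat k < lam \<Longrightarrow>
             sat lam H T \<tau> k \<alpha> \<longleftrightarrow> sat lam H T \<tau> k \<beta>"
  shows "mht_equiv \<alpha> \<beta>"
  using assms timed_ht_trace_there by (fastforce simp: mht_equiv_def Iff_def)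

lemma mht_equiv_Neg_Until: "mht_equiv (Neg (Until I \<phi> \<psi>)) (Release I (Neg \<phi>) (Neg \<psi>))"
proof (rule mht_equivI)
  fix lam and H T :: "nat \<Rightarrow> 'a set" and \<tau> k
  assume "timed_ht_trace lam H T \<tau>" and "enat k < lam"
  then show "sat lam H T \<tau> k (Neg (Until I \<phi> \<psi>)) \<longleftrightarrow>
             sat lam H T \<tau> k (Release I (Neg \<phi>) (Neg \<psi>))"
    by (simp add: sat_Neg_iff) (meson sat_Neg_iff enat_ord_simps order_less_trans)
qed

lemma mht_equiv_Neg_Release: "mht_equiv (Neg (Release I \<phi> \<psi>)) (Until I (Neg \<phi>) (Neg \<psi>))"
proof (rule mht_equivI)
  fix lam and H T :: "nat \<Rightarrow> 'a set" and \<tau> k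
  assume "timed_ht_trace lam H T \<tau>" and "enat k < lam"
  then show "sat lam H T \<tau> k (Neg (Release I \<phi> \<psi>)) \<longleftrightarrow>
             sat lam H T \<tau> k (Until I (Neg \<phi>) (Neg \<psi>))"
    by (simp add: sat_Neg_iff) (meson sat_Neg_iff enat_ord_simps order_less_trans)
qed

lemma mht_equiv_Neg_Since: "mht_equiv (Neg (Since I \<phi> \<psi>)) (Trigger I (Neg \<phi>) (Neg \<psi>))"
proof (rule mht_equivI)
  fix lam and H T :: "nat \<Rightarrow> 'a set" and \<tau> k
  assume "timed_ht_trace lam H T \<tau>" and "enat k < lam"
  then show "sat lam H T \<tau> k (Neg (Since I \<phi> \<psi>)) \<longleftrightarrow>
             sat lam H T \<tau> k (Trigger I (Neg \<phi>) (Neg \<psi>))"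
    by (simp add: sat_Neg_iff) (meson sat_Neg_iff enat_ord_simps order_le_less_trans)
qed

lemma mht_equiv_Neg_Trigger: "mht_equiv (Neg (Trigger I \<phi> \<psi>)) (Since I (Neg \<phi>) (Neg \<psi>))"
proof (rule mht_equivI)
  fix lam and H T :: "nat \<Rightarrow> 'a set" and \<tau> k
  assume "timed_ht_trace lam H T \<tau>" and "enat k < lam"
  then show "sat lam H T \<tau> k (Neg (Trigger I \<phi> \<psi>)) \<longleftrightarrow>
             sat lam H T \<tau> k (Since I (Neg \<phi>) (Neg \<psi>))"
    by (simp add: sat_Neg_iff) (meson sat_Neg_iff enat_ord_simps order_le_less_trans)
qed

theorem proposition8:
  fixes \<phi> \<psi> :: "'a mformula" and I :: interval
  shows "mht_equiv (Neg (Until I \<phi> \<psi>)) (Release I (Neg \<phi>) (Neg \<psi>)) \<and>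
         mht_equiv (Neg (Release I \<phi> \<psi>)) (Until I (Neg \<phi>) (Neg \<psi>)) \<and>
         mht_equiv (Neg (Since I \<phi> \<psi>)) (Trigger I (Neg \<phi>) (Neg \<psi>)) \<and>
         mht_equiv (Neg (Trigger I \<phi> \<psi>)) (Since I (Neg \<phi>) (Neg \<psi>))"
  by (simp add: mht_equiv_Neg_Until mht_equiv_Neg_Release mht_equiv_Neg_Since
      mht_equiv_Neg_Trigger)

end
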